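(* Let $\mathbf v=(v_1,\dots,v_m)$ and $\mathbf k=(k_1,\dots,k_m)$ be $m$-tuples of positive integers with $k_i\le v_i$ for all $i$ and $\sum_i k_i\ge2$. Let $\mathcal D$ be a ${\rm GC}(\mathbf v,\mathbf k,2)$ with $N$ blocks and let $I\subseteq\{1,\dots,m\}$ be non-empty. Then, provided $\mathbf k^I\neq(1)$, there exists a ${\rm GC}(\mathbf v^I,\mathbf k^I,2)$ with $N$ blocks, and in particular $C(\mathbf v,\mathbf k,2)\ge C(\mathbf v^I,\mathbf k^I,2)$.
   Context: For an $m$-tuple $\mathbf x$ and a non-empty $I\subseteq\{1,\dots,m\}$, the restriction $\mathbf x^I$ is the tuple of entries of $\mathbf x$ in positions from $I$ (in increasing order). For tuples $\mathbf v,\mathbf k$ of positive integers of the same length $n$ with $\mathbf k\le\mathbf v$ entrywise: let $X_1,\dots,X_n$ be pairwise disjoint sets with $|X_i|=v_i$; a block is an $n$-tuple $(B_1,\dots,B_n)$ with $B_i\subseteq X_i$, $|B_i|=k_i$; an $n$-tuple of sets $(T_1,\dots,T_n)$ is $(\mathbf v,\mathbf k,2)$-admissible if $T_i\subseteq X_i$, $|T_i|\le k_i$ and $\sum|T_i|=2$, and is contained in a block if $T_i\subseteq B_i$ for all $i$. A ${\rm GC}(\mathbf v,\mathbf k,2)$ is a finite family (repetitions allowed) of blocks containing every admissible tuple in at least one block; $C(\mathbf v,\mathbf k,2)$ is its minimum possible number of blocks, with $C=0$ if no design exists. *)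

theory Defs
  imports Main
begin

text \<open>Tuples are lists; positions are 0-based (position i of a list corresponds
to index i+1 in the paper). The point set X_i is represented by {i} \<times> {..<v!i};
since the X_i are pairwise disjoint we store the i-th component B_i of a block
(or T_i of an admissible tuple) as a subset of {..<v!i}.
The restriction x^I is nths x I (entries at positions in I, increasing order).\<close>

definition is_block :: "nat list \<Rightarrow> nat list \<Rightarrow> nat set list \<Rightarrow> bool" where
  "is_block v k B \<longleftrightarrow> length B = length v \<and>
     (\<forall>i<length v. B!i \<subseteq> {..<v!i} \<and> card (B!i) = k!i)"

definition admissible :: "nat list \<Rightarrow> nat list \<Rightarrow> nat set list \<Rightarrow> bool" where
  "admissible v k T \<longleftrightarrow> length T = length v \<and>
     (\<forall>i<length v. T!i \<subseteq> {..<v!i} \<and> card (T!i) \<le> k!i) \<and>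
     (\<Sum>i<length v. card (T!i)) = 2"

definition contained_in :: "nat set list \<Rightarrow> nat set list \<Rightarrow> bool" where
  "contained_in T B \<longleftrightarrow> (\<forall>i<length T. T!i \<subseteq> B!i)"

text \<open>A GC(v,k,2): a finite family (list, repetitions allowed) of blocks covering
every admissible tuple. Its number of blocks is the length of the list.\<close>
definition is_GC :: "nat list \<Rightarrow> nat list \<Rightarrow> nat set list list \<Rightarrow> bool" where
  "is_GC v k D \<longleftrightarrow> (\<forall>B\<in>set D. is_block v k B) \<and>
     (\<forall>T. admissible v k T \<longrightarrow> (\<exists>B\<in>set D. contained_in T B))"

definition C_num :: "nat list \<Rightarrow> nat list \<Rightarrow> nat" where
  "C_num v k = (if \<exists>D. is_GC v k D then (LEAST N. \<exists>D. is_GC v k D \<and> length D = N) else 0)"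

end

theory Submission
  imports Defs
begin

text \<open>Restricting every block of a GC(v, k, 2) to the coordinates in I gives a
GC(v^I, k^I, 2) with the same number of blocks: an admissible tuple for the
restricted parameters, padded with empty sets outside I, is admissible for the
original ones, and a block covering the padded tuple restricts to a block covering
the given one. Applying this to a minimum design gives the inequality for C.\<close>

lemma nths_zip:
  "length xs = length ys \<Longrightarrow> nths (zip xs ys) I = zip (nths xs I) (nths ys I)"
proof (induction xs arbitrary: ys I)
  case (Cons x xs)
  then obtain y ys' where "ys = y # ys'" by (cases ys) auto
  then show ?case using Cons by (simp add: nths_Cons)
qed simp

lemma list_all2_nths: "list_all2 P xs ys \<Longrightarrow> list_all2 P (nths xs I) (nths ys I)"
  by (induction arbitrary: I rule: list_all2_induct) (simp_all add: nths_Cons)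

lemma list_all2_nthsI:
  assumes "length xs = length ys" and "list_all2 P (nths xs I) (nths ys I)"
    and "\<forall>i<length xs. i \<notin> I \<longrightarrow> P (xs!i) (ys!i)"
  shows "list_all2 P xs ys"
  using assms
proof (induction xs arbitrary: ys I)
  case (Cons x xs)
  then obtain y ys' where ys: "ys = y # ys'" by (cases ys) auto
  have "list_all2 P xs ys'"
    using Cons.prems ys by (intro Cons.IH[of _ "{j. Suc j \<in> I}"]) (auto simp: nths_Cons split: if_splits)
  moreover have "P x y"
    using Cons.prems ys by (cases "0 \<in> I") (auto simp: nths_Cons)
  ultimately show ?case using ys by simp
qed simp

lemma sum_list_map_nths:
  "\<forall>i<length xs. i \<notin> I \<longrightarrow> f (xs!i) = 0 \<Longrightarrow> sum_list (map f (nths xs I)) = sum_list (map f xs)"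
proof (induction xs arbitrary: I)
  case (Cons x xs)
  have "sum_list (map f (nths xs {j. Suc j \<in> I})) = sum_list (map f xs)"
    using Cons.prems by (intro Cons.IH) auto
  then show ?case using Cons.prems by (auto simp: nths_Cons)
qed simp

lemma ex_list_nths_eq:
  assumes "length ys = card {i. i < m \<and> i \<in> I}"
  shows "\<exists>xs. length xs = m \<and> nths xs I = ys \<and> (\<forall>i<m. i \<notin> I \<longrightarrow> xs!i = d)"
  using assms
proof (induction m arbitrary: I ys)
  case (Suc m)
  define I' where "I' = {j. Suc j \<in> I}"
  have split: "{i. i < Suc m \<and> i \<in> I} = (if 0 \<in> I then insert 0 else id) (Suc ` {j. j < m \<and> j \<in> I'})"
    by (auto simp: I'_def less_Suc_eq_0_disj)
  define y where "y = (if 0 \<in> I then hd ys else d)"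
  define ys' where "ys' = (if 0 \<in> I then tl ys else ys)"
  have "length ys' = card {j. j < m \<and> j \<in> I'}"
    using Suc.prems unfolding split ys'_def by (simp add: card_image)
  then obtain xs where xs: "length xs = m" "nths xs I' = ys'" "\<forall>i<m. i \<notin> I' \<longrightarrow> xs!i = d"
    using Suc.IH by blast
  have "ys = (if 0 \<in> I then [y] else []) @ ys'"
    using Suc.prems unfolding split y_def ys'_def by (cases ys) (auto simp: card_image)
  then have "nths (y # xs) I = ys" using xs(2) by (simp add: nths_Cons I'_def)
  moreover have "\<forall>i<Suc m. i \<notin> I \<longrightarrow> (y # xs)!i = d"
    using xs(3) by (auto simp: y_def I'_def less_Suc_eq_0_disj)
  ultimately show ?case using xs(1) by (intro exI[of _ "y # xs"]) simp
qed simp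

lemma is_block_iff_list_all2:
  "length k = length v \<Longrightarrow>
   is_block v k B \<longleftrightarrow> list_all2 (\<lambda>b (n, c). b \<subseteq> {..<n} \<and> card b = c) B (zip v k)"
  by (auto simp: is_block_def list_all2_conv_all_nth subset_iff)

lemma admissible_iff_list_all2:
  "length k = length v \<Longrightarrow>
   admissible v k T \<longleftrightarrow> list_all2 (\<lambda>t (n, c). t \<subseteq> {..<n} \<and> card t \<le> c) T (zip v k)
                         \<and> sum_list (map card T) = 2"
  by (auto simp: admissible_def list_all2_conv_all_nth sum_list_sum_nth atLeast0LessThan subset_iff)

lemma contained_in_iff_list_all2:
  "length T = length B \<Longrightarrow> contained_in T B \<longleftrightarrow> list_all2 (\<subseteq>) T B"
  by (simp add: contained_in_def list_all2_conv_all_nth)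

lemma is_block_nths:
  "length k = length v \<Longrightarrow> is_block v k B \<Longrightarrow> is_block (nths v I) (nths k I) (nths B I)"
proof -
  assume lk: "length k = length v" and "is_block v k B"
  then have "list_all2 (\<lambda>b (n, c). b \<subseteq> {..<n} \<and> card b = c) (nths B I) (nths (zip v k) I)"
    by (simp add: is_block_iff_list_all2 list_all2_nths)
  moreover have "length (nths k I) = length (nths v I)"
    using lk by (simp add: length_nths)
  ultimately show ?thesis
    using lk by (simp add: is_block_iff_list_all2 nths_zip)
qed

lemma contained_in_nths:
  "length T = length B \<Longrightarrow> contained_in T B \<Longrightarrow> contained_in (nths T I) (nths B I)"
  by (simp add: contained_in_iff_list_all2 list_all2_nths length_nths)

lemma admissible_nths_lift:
  assumes lk: "length k = length v" and adm: "admissible (nths v I) (nths k I) T'"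
  shows "\<exists>T. admissible v k T \<and> nths T I = T'"
proof -
  have lk': "length (nths k I) = length (nths v I)"
    using lk by (simp add: length_nths)
  have "length T' = card {i. i < length v \<and> i \<in> I}"
    using adm by (simp add: admissible_def length_nths)
  then obtain T where T: "length T = length v" "nths T I = T'" "\<forall>i<length v. i \<notin> I \<longrightarrow> T!i = {}"
    using ex_list_nths_eq[of T' "length v" I "{}"] by blast
  have "list_all2 (\<lambda>t (n, c). t \<subseteq> {..<n} \<and> card t \<le> c) (nths T I) (nths (zip v k) I)"
    using adm T(2) lk lk' by (simp add: admissible_iff_list_all2 nths_zip)
  moreover have "\<forall>i<length T. i \<notin> I \<longrightarrow> (\<lambda>t (n, c). t \<subseteq> {..<n} \<and> card t \<le> c) (T!i) (zip v k ! i)"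
    using T(1,3) by (simp add: case_prod_beta)
  ultimately have "list_all2 (\<lambda>t (n, c). t \<subseteq> {..<n} \<and> card t \<le> c) T (zip v k)"
    using T(1) lk list_all2_nthsI[where xs = T and ys = "zip v k" and I = I] by simp
  moreover have "sum_list (map card T) = sum_list (map card T')"
    using T sum_list_map_nths[of T I card] by simp
  ultimately show ?thesis
    using adm T(2) lk lk' by (auto simp: admissible_iff_list_all2)
qed

lemma is_GC_nths:
  assumes lk: "length k = length v" and GC: "is_GC v k D"
  shows "is_GC (nths v I) (nths k I) (map (\<lambda>B. nths B I) D)"
  unfolding is_GC_def
proof (intro conjI allI impI ballI)
  fix B' assume "B' \<in> set (map (\<lambda>B. nths B I) D)"
  then show "is_block (nths v I) (nths k I) B'"
    using GC is_block_nths[OF lk] by (auto simp: is_GC_def)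
next
  fix T' assume "admissible (nths v I) (nths k I) T'"
  then obtain T where T: "admissible v k T" "nths T I = T'"
    using admissible_nths_lift[OF lk] by blast
  then obtain B where B: "B \<in> set D" "contained_in T B"
    using GC by (auto simp: is_GC_def)
  have "length T = length B"
    using T(1) B(1) GC by (simp add: is_GC_def is_block_def admissible_def)
  then have "contained_in T' (nths B I)"
    using contained_in_nths B(2) T(2) by blast
  then show "\<exists>B'\<in>set (map (\<lambda>B. nths B I) D). contained_in T' B'"
    using B(1) by auto
qed

lemma C_num_le_length:
  "is_GC v k D \<Longrightarrow> C_num v k \<le> length D"
  unfolding C_num_def by (auto intro: Least_le)

lemma C_num_attained:
  assumes "is_GC v k D"
  shows "\<exists>D'. is_GC v k D' \<and> length D' = C_num v k"
  using assms LeastI_ex[of "\<lambda>N. \<exists>D. is_GC v k D \<and> length D = N"] by (auto simp: C_num_def)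

theorem proposition3p8:
  fixes v k :: "nat list" and m N :: nat and D :: "nat set list list" and I :: "nat set"
  assumes "length v = m" and "length k = m"
    and "\<forall>i<m. 0 < k!i \<and> k!i \<le> v!i"
    and "sum_list k \<ge> 2"
    and "is_GC v k D" and "length D = N"
    and "I \<subseteq> {..<m}" and "I \<noteq> {}"
    and "nths k I \<noteq> [1]"
  shows "(\<exists>D'. is_GC (nths v I) (nths k I) D' \<and> length D' = N) \<and>
         C_num (nths v I) (nths k I) \<le> C_num v k"
proof
  have lk: "length k = length v" using assms(1,2) by simp
  show "\<exists>D'. is_GC (nths v I) (nths k I) D' \<and> length D' = N"
    using is_GC_nths[OF lk assms(5), of I] assms(6) by auto
  obtain D0 where D0: "is_GC v k D0" "length D0 = C_num v k"
    using C_num_attained[OF assms(5)] by blast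
  show "C_num (nths v I) (nths k I) \<le> C_num v k"
    using C_num_le_length[OF is_GC_nths[OF lk D0(1), of I]] D0(2) by simp
qed

end
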